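(* Let $K$ be a field of characteristic $0$ and let $f=\sum a_{i,j}x_1^ix_2^j\in K[[x_1,x_2]]$ be D-finite over $K(x_1,x_2)$. Fix non-zero $L_1\in K[x_1,x_2]\langle D_{x_1}\rangle$, $L_2\in K[x_1,x_2]\langle D_{x_2}\rangle$ annihilating $f$, let $r_f$ be the maximum of their orders and $d_f$ the maximum of their degrees. Then $\Delta_{1,2}(f)=\sum_{i\ge0}a_{i,i}x_1^i$ is D-finite over $K(x_1)$, and there exists a non-zero operator $\bar P\in K[x_1]\langle D_{x_1}\rangle$ with $\bar P(\Delta_{1,2}(f))=0$, $\deg(\bar P)=O(d_f^3r_f^4)$ and $\operatorname{ord}(\bar P)=O(d_f^2r_f^2)$.
   Context: A series is D-finite over the field of rational functions in its variables if the space spanned over that field by all its partial derivatives is finite-dimensional. For $L=\sum_{j=0}^r\ell_jD_{y}^j$ with polynomial coefficients and $\ell_r\ne0$, order is $r$ and degree is the maximal total degree of the $\ell_j$. The $O(\cdot)$ bounds are as functions of $d_f$ and $r_f$. *)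

theory Defs
  imports "HOL-Computational_Algebra.Computational_Algebra"
begin

text \<open>Bivariate power series in K[[x1,x2]] are represented as 'a fps fps: for f, the
 coefficient a_{i,j} of x1^i x2^j is f $ i $ j (outer variable x1, inner x2).
 Bivariate polynomials in K[x1,x2] are 'a poly poly: the coefficient of x1^i x2^j
 of p is coeff (coeff p i) j.\<close>

definition poly2_to_fps2 :: "'a::field poly poly \<Rightarrow> 'a fps fps" where
  "poly2_to_fps2 p = Abs_fps (\<lambda>i. fps_of_poly (coeff p i))"

definition tdeg2 :: "'a::zero poly poly \<Rightarrow> nat" where
  "tdeg2 p = Max (insert 0 {i + j | i j. coeff (coeff p i) j \<noteq> 0})"

definition D1 :: "'a::field fps fps \<Rightarrow> 'a fps fps" where
  "D1 f = fps_deriv f"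

definition D2 :: "'a::field fps fps \<Rightarrow> 'a fps fps" where
  "D2 f = Abs_fps (\<lambda>i. fps_deriv (f $ i))"

definition pderiv2 :: "nat \<Rightarrow> nat \<Rightarrow> 'a::field fps fps \<Rightarrow> 'a fps fps" where
  "pderiv2 a b f = (D1 ^^ a) ((D2 ^^ b) f)"

text \<open>K(x1,x2), embedded in the fraction field of K[[x1,x2]]\<close>
definition ratfun2 :: "'a::field fps fps fract set" where
  "ratfun2 = {Fract (poly2_to_fps2 p) (poly2_to_fps2 q) | p q. q \<noteq> 0}"

text \<open>D-finite over K(x1,x2): the K(x1,x2)-span of all partial derivatives is
 finite-dimensional, i.e. spanned by finitely many of them.\<close>
definition dfinite2 :: "'a::field fps fps \<Rightarrow> bool" where
  "dfinite2 f \<longleftrightarrow> (\<exists>n. \<forall>a b. \<exists>c. (\<forall>i j. c i j \<in> ratfun2) \<and>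
      Fract (pderiv2 a b f) 1 = (\<Sum>i<n. \<Sum>j<n. c i j * Fract (pderiv2 i j f) 1))"

text \<open>K(x1), embedded in the fraction field of K[[x1]]\<close>
definition ratfun1 :: "'a::field fps fract set" where
  "ratfun1 = {Fract (fps_of_poly p) (fps_of_poly q) | p q. q \<noteq> 0}"

definition dfinite1 :: "'a::field fps \<Rightarrow> bool" where
  "dfinite1 g \<longleftrightarrow> (\<exists>n. \<forall>k. \<exists>c. (\<forall>i. c i \<in> ratfun1) \<and>
      Fract ((fps_deriv ^^ k) g) 1 = (\<Sum>i<n. c i * Fract ((fps_deriv ^^ i) g) 1))"

text \<open>Operators L = sum_j l_j D^j are lists [l_0, ..., l_r]; nonzero means
 the list is nonempty with l_r \<noteq> 0; order r = length - 1.\<close>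
definition op_nonzero :: "'b::zero list \<Rightarrow> bool" where
  "op_nonzero L \<longleftrightarrow> L \<noteq> [] \<and> last L \<noteq> 0"

definition op_ord :: "'b list \<Rightarrow> nat" where
  "op_ord L = length L - 1"

definition op_deg2 :: "'a::zero poly poly list \<Rightarrow> nat" where
  "op_deg2 L = Max (insert 0 (tdeg2 ` set L))"

definition op_deg1 :: "'a::zero poly list \<Rightarrow> nat" where
  "op_deg1 L = Max (insert 0 (degree ` set L))"

definition apply_op_x1 :: "'a::field poly poly list \<Rightarrow> 'a fps fps \<Rightarrow> 'a fps fps" where
  "apply_op_x1 L f = (\<Sum>j<length L. poly2_to_fps2 (L ! j) * (D1 ^^ j) f)"

definition apply_op_x2 :: "'a::field poly poly list \<Rightarrow> 'a fps fps \<Rightarrow> 'a fps fps" where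
  "apply_op_x2 L f = (\<Sum>j<length L. poly2_to_fps2 (L ! j) * (D2 ^^ j) f)"

definition apply_op1 :: "'a::field poly list \<Rightarrow> 'a fps \<Rightarrow> 'a fps" where
  "apply_op1 P g = (\<Sum>j<length P. fps_of_poly (P ! j) * (fps_deriv ^^ j) g)"

definition diag12 :: "'a fps fps \<Rightarrow> 'a fps" where
  "diag12 f = Abs_fps (\<lambda>i. f $ i $ i)"

definition hyp :: "'a::field fps fps \<Rightarrow> 'a poly poly list \<Rightarrow> 'a poly poly list \<Rightarrow> bool" where
  "hyp f L1 L2 \<longleftrightarrow> dfinite2 f \<and> op_nonzero L1 \<and> op_nonzero L2 \<and>
     apply_op_x1 L1 f = 0 \<and> apply_op_x2 L2 f = 0"

end

(*
  Let r1, r2 be the orders, l1, l2 the leading coefficients and d a bound on the total degrees of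
  the coefficients of L1 and L2.  Using L1 and L2 to eliminate high derivatives, (l1 l2)^j times
  any derivative of f of total order j becomes a K[x1,x2]-combination of the r1 r2 derivatives
  D1^i D2^j f (i < r1, j < r2) with coefficients of controlled total degree; so all these series
  lie in K-vector spaces of dimension O(B^2 r1 r2), B the degree budget.

  With the Euler operator theta = x2 D2 - x1 D1 and N = 121 d^2 r^2, the (N + 1)^3 series
  x1^a x2^(a + 2N - i - k) D1^i (theta - k) ... (theta - 1) f   (a, i, k <= N)
  therefore satisfy a nontrivial K-linear relation.  Taking the coefficient of x1^n x2^(n + 2N - k0),
  k0 the least k occurring in the relation, only the terms with k = k0 survive and they involve
  only diagonal coefficients of f: the relation becomes a linear recurrence with polynomial
  coefficients for the diagonal, i.e. an operator of order and degree at most N annihilating it.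
  An annihilating operator in turn makes the diagonal D-finite.
*)
theory Submission
  imports Defs
begin

lemma (in vector_space) exists_nontrivial_relation:
  assumes I: "finite I" and S: "finite S" and card: "card S < card I"
    and F: "\<And>x. x \<in> I \<Longrightarrow> F x \<in> span S"
  shows "\<exists>c. (\<exists>x\<in>I. c x \<noteq> 0) \<and> (\<Sum>x\<in>I. scale (c x) (F x)) = 0"
proof (cases "inj_on F I")
  case False
  then obtain x y where xy: "x \<in> I" "y \<in> I" "x \<noteq> y" "F x = F y"
    unfolding inj_on_def by blast
  define c :: "_ \<Rightarrow> 'a" where "c z = (if z = x then 1 else if z = y then -1 else 0)" for z
  have "(\<Sum>z\<in>I. scale (c z) (F z)) = (\<Sum>z\<in>I. (if z = x then F x else 0) + (if z = y then - F y else 0))"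
    by (rule sum.cong) (auto simp: c_def xy(3) scale_minus_left)
  also have "\<dots> = 0"
    using xy I by (simp add: sum.distrib)
  finally show ?thesis
    using xy(1) by (intro exI[of _ c]) (auto simp: c_def)
next
  case True
  have "F ` I \<subseteq> span S"
    using F by blast
  then have "card (F ` I) \<le> card S" if "independent (F ` I)"
    using independent_span_bound[OF S that] by simp
  then have "dependent (F ` I)"
    using card True by (auto simp: card_image)
  then obtain u where u: "\<exists>v\<in>F ` I. u v \<noteq> 0" "(\<Sum>v\<in>F ` I. scale (u v) v) = 0"
    unfolding dependent_finite[OF finite_imageI[OF I]] by blast
  have "(\<Sum>x\<in>I. scale (u (F x)) (F x)) = (\<Sum>v\<in>F ` I. scale (u v) v)"
    using sum.reindex[OF True, of "\<lambda>v. scale (u v) v"] by simp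
  then show ?thesis
    using u by (intro exI[of _ "\<lambda>x. u (F x)"]) auto
qed

section \<open>Bivariate power series as a vector space over the coefficient field\<close>

definition cscale :: "'a::field \<Rightarrow> 'a fps fps \<Rightarrow> 'a fps fps" where
  "cscale c h = fps_const (fps_const c) * h"

interpretation vs: vector_space "cscale :: 'a::field \<Rightarrow> 'a fps fps \<Rightarrow> 'a fps fps"
  by unfold_locales
    (auto simp: cscale_def algebra_simps simp flip: fps_const_add fps_const_mult)

lemma cscale_nth [simp]: "cscale c h $ p $ q = c * h $ p $ q"
  by (simp add: cscale_def)

lemma mult_cscale_add: "q * (cscale c y + z) = cscale c (q * y) + q * (z :: 'a::field fps fps)"
  by (simp add: cscale_def algebra_simps)

lemma of_nat_mult_eq_cscale: "of_nat k * (h :: 'a::field fps fps) = cscale (of_nat k) h"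
  by (simp add: cscale_def fps_of_nat)

lemma span_map:
  assumes "x \<in> vs.span S" "\<And>y. y \<in> S \<Longrightarrow> \<phi> y \<in> vs.span T" "\<phi> 0 = 0"
    "\<And>c y z. \<phi> (cscale c y + z) = cscale c (\<phi> y) + \<phi> z"
  shows "\<phi> x \<in> vs.span T"
  using assms(1)
proof (induction rule: vs.span_induct_alt)
  case base
  show ?case
    using assms(3) by (simp add: vs.span_zero)
next
  case (step c x y)
  then show ?case
    using assms(2,4) by (simp add: vs.span_add vs.span_scale)
qed

lemma span_mult:
  assumes "x \<in> vs.span S" "\<And>y. y \<in> S \<Longrightarrow> q * y \<in> vs.span T"
  shows "q * x \<in> vs.span T"
  by (rule span_map[OF assms]) (auto simp: mult_cscale_add)

definition fps_Y :: "'a::comm_ring_1 fps fps" where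
  "fps_Y = fps_const fps_X"

lemma fps_X_Y_power_mult_nth:
  "(fps_X ^ a * (fps_Y ^ b * (H :: 'a::comm_ring_1 fps fps))) $ p $ q =
    (if a \<le> p \<and> b \<le> q then H $ (p - a) $ (q - b) else 0)"
  by (simp add: fps_X_power_mult_nth fps_Y_def fps_const_power)

lemma cscale_monomial_nth:
  "cscale c (fps_X ^ u * fps_Y ^ v :: 'a::field fps fps) $ p $ q = (if p = u \<and> q = v then c else 0)"
proof -
  have "(fps_X ^ u * fps_Y ^ v :: 'a fps fps) $ p $ q = (if p = u \<and> q = v then 1 else 0)"
    using fps_X_Y_power_mult_nth[of u v 1 p q] by (auto simp: fps_one_nth)
  then show ?thesis
    by simp
qed

lemma fps_Y_mult_nth:
  "(fps_Y * (H :: 'a::comm_ring_1 fps fps)) $ p $ q = (if q = 0 then 0 else H $ p $ (q - 1))"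
  by (simp add: fps_Y_def)

definition tdeg_le :: "'a::zero fps fps \<Rightarrow> nat \<Rightarrow> bool" where
  "tdeg_le m e \<longleftrightarrow> (\<forall>u v. m $ u $ v \<noteq> 0 \<longrightarrow> u + v \<le> e)"

lemma tdeg_le_1 [simp]: "tdeg_le (1 :: 'a::comm_ring_1 fps fps) e"
  by (auto simp: tdeg_le_def fps_one_nth split: if_splits)

lemma tdeg_le_mono: "tdeg_le m e \<Longrightarrow> e \<le> e' \<Longrightarrow> tdeg_le m e'"
  by (force simp: tdeg_le_def)

lemma tdeg_le_add: "tdeg_le (m :: 'a::monoid_add fps fps) e \<Longrightarrow> tdeg_le n e \<Longrightarrow> tdeg_le (m + n) e"
  unfolding tdeg_le_def by (metis add.left_neutral fps_add_nth)

lemma tdeg_le_cscale: "tdeg_le m e \<Longrightarrow> tdeg_le (cscale c m) e"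
  by (force simp: tdeg_le_def)

lemma tdeg_le_of_nat_mult: "tdeg_le m e \<Longrightarrow> tdeg_le (of_nat k * (m :: 'a::field fps fps)) e"
  by (simp add: of_nat_mult_eq_cscale tdeg_le_cscale)

lemma tdeg_le_mult:
  fixes m n :: "'a::comm_ring_1 fps fps"
  assumes "tdeg_le m e1" "tdeg_le n e2"
  shows "tdeg_le (m * n) (e1 + e2)"
  unfolding tdeg_le_def
proof (intro allI impI)
  fix u v
  assume "(m * n) $ u $ v \<noteq> 0"
  then have "(\<Sum>i=0..u. (m $ i * n $ (u - i)) $ v) \<noteq> 0"
    by (simp add: fps_mult_nth fps_sum_nth)
  then obtain i where i: "i \<le> u" "(m $ i * n $ (u - i)) $ v \<noteq> 0"
    by (metis (no_types, lifting) atLeastAtMost_iff sum.neutral)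
  then have "(\<Sum>j=0..v. m $ i $ j * n $ (u - i) $ (v - j)) \<noteq> 0"
    by (simp add: fps_mult_nth)
  then obtain j where j: "j \<le> v" "m $ i $ j * n $ (u - i) $ (v - j) \<noteq> 0"
    by (metis (no_types, lifting) atLeastAtMost_iff sum.neutral)
  then have "m $ i $ j \<noteq> 0" "n $ (u - i) $ (v - j) \<noteq> 0"
    by auto
  then have "i + j \<le> e1" "(u - i) + (v - j) \<le> e2"
    using assms unfolding tdeg_le_def by blast+
  then show "u + v \<le> e1 + e2"
    using i j by linarith
qed

lemma tdeg_le_power: "tdeg_le (m :: 'a::comm_ring_1 fps fps) e \<Longrightarrow> tdeg_le (m ^ n) (n * e)"
  by (induction n) (auto intro: tdeg_le_mult)

lemma tdeg_le_X: "tdeg_le (fps_X :: 'a::comm_ring_1 fps fps) 1"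
  by (auto simp: tdeg_le_def fps_X_def fps_one_nth split: if_splits)

lemma tdeg_le_Y: "tdeg_le (fps_Y :: 'a::comm_ring_1 fps fps) 1"
  by (auto simp: tdeg_le_def fps_Y_def fps_X_def split: if_splits)

lemma tdeg_le_monomial_expansion:
  fixes m :: "'a::field fps fps"
  assumes "tdeg_le m e"
  shows "m = (\<Sum>u\<le>e. \<Sum>v\<le>e. cscale (m $ u $ v) (fps_X ^ u * fps_Y ^ v))"
proof (rule fps_ext, rule fps_ext)
  fix p q
  have row: "(\<Sum>v\<le>e. if p = u \<and> q = v then m $ u $ v else 0) = (if p = u \<and> q \<le> e then m $ u $ q else 0)" for u
    by (cases "p = u") simp_all
  have "(\<Sum>u\<le>e. \<Sum>v\<le>e. cscale (m $ u $ v) (fps_X ^ u * fps_Y ^ v)) $ p $ q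
      = (\<Sum>u\<le>e. \<Sum>v\<le>e. if p = u \<and> q = v then m $ u $ v else 0)"
    by (simp only: fps_sum_nth cscale_monomial_nth)
  also have "\<dots> = (if p \<le> e \<and> q \<le> e then m $ p $ q else 0)"
    unfolding row by (cases "q \<le> e") simp_all
  also have "\<dots> = m $ p $ q"
    using assms unfolding tdeg_le_def by (metis add_leD1 add_leD2)
  finally show "m $ p $ q = (\<Sum>u\<le>e. \<Sum>v\<le>e. cscale (m $ u $ v) (fps_X ^ u * fps_Y ^ v)) $ p $ q"
    by simp
qed

section \<open>Derivations\<close>

locale derivation =
  fixes D :: "'a::comm_ring_1 \<Rightarrow> 'a"
  assumes add: "D (a + b) = D a + D b"
    and mult: "D (a * b) = D a * b + a * D b"
begin

lemma zero [simp]: "D 0 = 0"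
  using add[of 0 0] by simp

lemma one [simp]: "D 1 = 0"
  using mult[of 1 1] by simp

lemma map_sum: "D (sum g A) = (\<Sum>i\<in>A. D (g i))"
  by (induction A rule: infinite_finite_induct) (auto simp: add)

lemma of_nat_mult: "D (of_nat k * a) = of_nat k * D a"
  by (induction k) (simp_all add: add distrib_right)

lemma mult_power: "l * D (l ^ n) = of_nat n * D l * l ^ n"
proof (induction n)
  case (Suc n)
  have "l * D (l ^ Suc n) = D l * l ^ Suc n + l * (l * D (l ^ n))"
    by (simp add: mult algebra_simps)
  also have "\<dots> = of_nat (Suc n) * D l * l ^ Suc n"
    by (simp add: Suc algebra_simps)
  finally show ?case .
qed simp

lemma mult_powers_product:
  "a * b * D (m * a ^ j * b ^ i * h) =
     (a * b * D m + of_nat j * b * D a * m + of_nat i * a * D b * m) * a ^ j * b ^ i * h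
     + a * b * m * a ^ j * b ^ i * D h"
proof -
  have "a * b * D (m * a ^ j * b ^ i * h) =
      (a * b * D m * a ^ j * b ^ i + m * b * (a * D (a ^ j)) * b ^ i + m * a * a ^ j * (b * D (b ^ i))) * h
      + a * b * m * a ^ j * b ^ i * D h"
    by (simp add: mult algebra_simps)
  then show ?thesis
    by (simp add: mult_power algebra_simps)
qed

lemma iter_zero [simp]: "(D ^^ n) 0 = 0"
  by (induction n) simp_all

lemma iter_sum: "(D ^^ n) (sum g A) = (\<Sum>i\<in>A. (D ^^ n) (g i))"
  by (induction n) (simp_all add: map_sum)

lemma leibniz: "(D ^^ n) (a * b) = (\<Sum>s\<le>n. of_nat (n choose s) * ((D ^^ s) a * (D ^^ (n - s)) b))"
proof (induction n)
  case (Suc n)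
  let ?T = "\<lambda>s. (D ^^ s) a * (D ^^ (Suc n - s)) b"
  have "(D ^^ Suc n) (a * b) = (\<Sum>s\<le>n. of_nat (n choose s) * D ((D ^^ s) a * (D ^^ (n - s)) b))"
    by (simp add: Suc map_sum of_nat_mult)
  also have "\<dots> = (\<Sum>s\<le>n. of_nat (n choose s) * ?T (Suc s) + of_nat (n choose s) * ?T s)"
  proof (rule sum.cong[OF refl])
    fix s
    assume "s \<in> {..n}"
    then have "D ((D ^^ (n - s)) b) = (D ^^ (Suc n - s)) b"
      by (simp add: Suc_diff_le)
    then show "of_nat (n choose s) * D ((D ^^ s) a * (D ^^ (n - s)) b) =
        of_nat (n choose s) * ?T (Suc s) + of_nat (n choose s) * ?T s"
      by (simp add: mult distrib_left)
  qed
  also have "\<dots> = (\<Sum>s\<le>n. of_nat (n choose s) * ?T (Suc s)) + (\<Sum>s\<le>n. of_nat (n choose s) * ?T s)"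
    by (rule sum.distrib)
  also have "(\<Sum>s\<le>n. of_nat (n choose s) * ?T s) = (\<Sum>s\<le>Suc n. of_nat (n choose s) * ?T s)"
    by (simp add: binomial_eq_0)
  also have "\<dots> = of_nat (n choose 0) * ?T 0 + (\<Sum>s\<le>n. of_nat (n choose Suc s) * ?T (Suc s))"
    by (rule sum.atMost_Suc_shift)
  also have "(\<Sum>s\<le>n. of_nat (n choose s) * ?T (Suc s)) + \<dots>
      = of_nat (Suc n choose 0) * ?T 0 + (\<Sum>s\<le>n. of_nat (Suc n choose Suc s) * ?T (Suc s))"
    by (simp only: binomial_Suc_Suc binomial_n_0 of_nat_add distrib_right sum.distrib add.left_commute)
  also have "\<dots> = (\<Sum>s\<le>Suc n. of_nat (Suc n choose s) * ?T s)"
    by (rule sum.atMost_Suc_shift[symmetric])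
  finally show ?case
    by simp
qed simp

end

interpretation fps_deriv: derivation "fps_deriv :: 'a::comm_ring_1 fps \<Rightarrow> 'a fps"
  by unfold_locales (simp_all add: fps_deriv_mult)

locale bivariate_derivation = derivation D for D :: "'a::field fps fps \<Rightarrow> 'a fps fps" +
  assumes cscale: "D (cscale c h) = cscale c (D h)"
    and tdeg_le: "tdeg_le m e \<Longrightarrow> tdeg_le (D m) e"
begin

lemma iter_tdeg_le: "tdeg_le m e \<Longrightarrow> tdeg_le ((D ^^ n) m) e"
  by (induction n) (simp_all add: tdeg_le)

end

lemma D2_nth [simp]: "D2 f $ i = fps_deriv (f $ i)"
  by (simp add: D2_def)

lemma D1_nth_nth: "D1 (H :: 'a::field fps fps) $ p $ q = of_nat (p + 1) * H $ (p + 1) $ q"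
  by (simp add: D1_def fps_of_nat[symmetric])

lemma D2_nth_nth: "D2 (H :: 'a::field fps fps) $ p $ q = of_nat (q + 1) * H $ p $ (q + 1)"
  by simp

interpretation D1: bivariate_derivation "D1 :: 'a::field fps fps \<Rightarrow> 'a fps fps"
proof
  fix m :: "'a fps fps" and e
  assume m: "tdeg_le m e"
  show "tdeg_le (D1 m) e"
    unfolding tdeg_le_def
  proof (intro allI impI)
    fix u v
    assume "D1 m $ u $ v \<noteq> 0"
    then have "m $ (u + 1) $ v \<noteq> 0"
      by (simp add: D1_nth_nth)
    then show "u + v \<le> e"
      using m unfolding tdeg_le_def by fastforce
  qed
qed (simp_all add: D1_def cscale_def)

interpretation D2: bivariate_derivation "D2 :: 'a::field fps fps \<Rightarrow> 'a fps fps"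
proof
  fix a b :: "'a fps fps"
  show "D2 (a + b) = D2 a + D2 b"
    by (rule fps_ext) simp
  show "D2 (a * b) = D2 a * b + a * D2 b"
    by (rule fps_ext) (simp add: fps_mult_nth fps_deriv_sum fps_deriv_mult sum.distrib)
next
  fix c :: 'a and h :: "'a fps fps"
  show "D2 (cscale c h) = cscale c (D2 h)"
    by (rule fps_ext) (simp add: cscale_def)
next
  fix m :: "'a fps fps" and e
  assume m: "tdeg_le m e"
  show "tdeg_le (D2 m) e"
    unfolding tdeg_le_def
  proof (intro allI impI)
    fix u v
    assume "D2 m $ u $ v \<noteq> 0"
    then have "m $ u $ (v + 1) \<noteq> 0"
      by simp
    then show "u + v \<le> e"
      using m unfolding tdeg_le_def by fastforce
  qed
qed

lemma D1_D2_commute: "D1 (D2 x) = D2 (D1 (x :: 'a::field fps fps))"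
  by (rule fps_ext) (simp add: D1_def fps_of_nat[symmetric])

section \<open>Reduction modulo the annihilators\<close>

definition lower_terms ::
    "('a::field fps fps \<Rightarrow> 'a fps fps) \<Rightarrow> ('a fps fps \<Rightarrow> 'a fps fps) \<Rightarrow> 'a fps fps \<Rightarrow> nat \<Rightarrow> nat \<Rightarrow>
      'a fps fps \<Rightarrow> nat \<Rightarrow> 'a fps fps set" where
  "lower_terms DA DB l r d f b =
     {c * l ^ b' * (DA ^^ \<alpha>) ((DB ^^ b') f) | c b' \<alpha>. b' \<le> b \<and> \<alpha> < r \<and> tdeg_le c ((b - b' + 1) * d)}"

lemma lower_terms_spanI:
  "b' \<le> b \<Longrightarrow> \<alpha> < r \<Longrightarrow> tdeg_le c ((b - b' + 1) * d) \<Longrightarrow>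
    c * l ^ b' * (DA ^^ \<alpha>) ((DB ^^ b') f) \<in> vs.span (lower_terms DA DB l r d f b)"
  unfolding lower_terms_def by (rule vs.span_base) blast

lemma lower_terms_mult:
  assumes "x \<in> vs.span (lower_terms DA DB l r d f b0)" "b0 \<le> b" "tdeg_le q ((b - b0) * d)"
  shows "q * x \<in> vs.span (lower_terms DA DB l r d f b)"
proof (rule span_mult[OF assms(1)])
  fix y
  assume "y \<in> lower_terms DA DB l r d f b0"
  then obtain c b' \<alpha> where y: "y = c * l ^ b' * (DA ^^ \<alpha>) ((DB ^^ b') f)" "b' \<le> b0" "\<alpha> < r"
      "tdeg_le c ((b0 - b' + 1) * d)"
    unfolding lower_terms_def by blast
  have eq: "(b - b0) * d + (b0 - b' + 1) * d = (b - b' + 1) * d"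
    using y(2) assms(2) by (simp add: add_mult_distrib[symmetric])
  have "tdeg_le (q * c) ((b - b0) * d + (b0 - b' + 1) * d)"
    by (rule tdeg_le_mult[OF assms(3) y(4)])
  then have "tdeg_le (q * c) ((b - b' + 1) * d)"
    by (simp only: eq)
  then show "q * y \<in> vs.span (lower_terms DA DB l r d f b)"
    using lower_terms_spanI[of b' b \<alpha> r "q * c"] y(2,3) assms(2) by (simp add: y(1) mult.assoc)
qed

definition normal_terms ::
    "('a::field fps fps \<Rightarrow> 'a fps fps) \<Rightarrow> ('a fps fps \<Rightarrow> 'a fps fps) \<Rightarrow> 'a fps fps \<Rightarrow> 'a fps fps \<Rightarrow>
      nat \<Rightarrow> nat \<Rightarrow> nat \<Rightarrow> 'a fps fps \<Rightarrow> nat \<Rightarrow> 'a fps fps set" where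
  "normal_terms DA DB lA lB rA rB d f B =
     {m * lA ^ j * lB ^ i * (DA ^^ i) ((DB ^^ j) f) | m i j.
        i < rA \<and> j < rB \<and> tdeg_le m (B + (rB - 1 - j) * d + (rA - 1 - i) * d)}"

lemma normal_terms_spanI:
  "i < rA \<Longrightarrow> j < rB \<Longrightarrow> tdeg_le m (B + (rB - 1 - j) * d + (rA - 1 - i) * d) \<Longrightarrow>
    m * lA ^ j * lB ^ i * (DA ^^ i) ((DB ^^ j) f) \<in> vs.span (normal_terms DA DB lA lB rA rB d f B)"
  unfolding normal_terms_def by (rule vs.span_base) blast

lemma normal_terms_span_mono:
  "B \<le> B' \<Longrightarrow> vs.span (normal_terms DA DB lA lB rA rB d f B) \<subseteq> vs.span (normal_terms DA DB lA lB rA rB d f B')"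
  unfolding normal_terms_def
  by (rule vs.span_mono) (blast intro: tdeg_le_mono add_le_mono1)

lemma normal_terms_mult:
  assumes "x \<in> vs.span (normal_terms DA DB lA lB rA rB d f B)" "tdeg_le q e"
  shows "q * x \<in> vs.span (normal_terms DA DB lA lB rA rB d f (B + e))"
proof (rule span_mult[OF assms(1)])
  fix y
  assume "y \<in> normal_terms DA DB lA lB rA rB d f B"
  then obtain m i j where y: "y = m * lA ^ j * lB ^ i * (DA ^^ i) ((DB ^^ j) f)" "i < rA" "j < rB"
      "tdeg_le m (B + (rB - 1 - j) * d + (rA - 1 - i) * d)"
    unfolding normal_terms_def by blast
  have "tdeg_le (q * m) ((B + e) + (rB - 1 - j) * d + (rA - 1 - i) * d)"
    using tdeg_le_mult[OF assms(2) y(4)] by (simp add: algebra_simps)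
  then have "q * m * lA ^ j * lB ^ i * (DA ^^ i) ((DB ^^ j) f) \<in> vs.span (normal_terms DA DB lA lB rA rB d f (B + e))"
    by (rule normal_terms_spanI[OF y(2,3)])
  then show "q * y \<in> vs.span (normal_terms DA DB lA lB rA rB d f (B + e))"
    by (simp add: y(1) mult.assoc)
qed

locale commuting_derivations =
  DA: bivariate_derivation DA + DB: bivariate_derivation DB
  for DA DB :: "'a::field fps fps \<Rightarrow> 'a fps fps" +
  assumes commute: "DA (DB x) = DB (DA x)"
begin

lemma iter_commute: "(DA ^^ n) ((DB ^^ m) x) = (DB ^^ m) ((DA ^^ n) x)"
proof -
  have "DA ((DB ^^ m) x) = (DB ^^ m) (DA x)" for x
    by (induction m) (simp_all add: commute)
  then show ?thesis
    by (induction n) simp_all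
qed

lemma normal_terms_swap: "normal_terms DA DB lA lB rA rB d f B = normal_terms DB DA lB lA rB rA d f B"
  unfolding normal_terms_def iter_commute by (auto simp: algebra_simps)

lemma lower_terms_binomial_term:
  assumes deg: "\<And>j. j \<le> r \<Longrightarrow> tdeg_le (P j) d" and "j < r" "s \<le> b"
  shows "P r ^ b * (of_nat (b choose s) * ((DB ^^ s) (P j) * (DA ^^ j) ((DB ^^ (b - s)) f)))
    \<in> vs.span (lower_terms DA DB (P r) r d f b)"
proof -
  have "tdeg_le (P r ^ s * (DB ^^ s) (P j)) (s * d + d)"
    using assms by (intro tdeg_le_mult tdeg_le_power DB.iter_tdeg_le deg) auto
  then have deg': "tdeg_le (of_nat (b choose s) * (P r ^ s * (DB ^^ s) (P j))) ((b - (b - s) + 1) * d)"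
    using assms by (intro tdeg_le_of_nat_mult) (simp add: algebra_simps)
  have eq: "P r ^ b * (of_nat (b choose s) * ((DB ^^ s) (P j) * (DA ^^ j) ((DB ^^ (b - s)) f))) =
      (of_nat (b choose s) * (P r ^ s * (DB ^^ s) (P j))) * P r ^ (b - s) * (DA ^^ j) ((DB ^^ (b - s)) f)"
    using assms by (simp add: algebra_simps power_add[symmetric])
  show ?thesis
    unfolding eq by (rule lower_terms_spanI[OF diff_le_self assms(2) deg'])
qed

text \<open>Differentiate the relation b times by DB and solve for the leading term; the other terms
  either have DA-order below r or are leading terms for smaller b, reduced by induction.\<close>
lemma leading_term_reduction:
  fixes P :: "nat \<Rightarrow> 'a fps fps"
  assumes deg: "\<And>j. j \<le> r \<Longrightarrow> tdeg_le (P j) d"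
    and ann: "(\<Sum>j\<le>r. P j * (DA ^^ j) f) = 0"
  shows "P r ^ (b + 1) * (DA ^^ r) ((DB ^^ b) f) \<in> vs.span (lower_terms DA DB (P r) r d f b)"
proof (induction b rule: less_induct)
  case (less b)
  define l where "l = P r"
  define T where "T j s = of_nat (b choose s) * ((DB ^^ s) (P j) * (DA ^^ j) ((DB ^^ (b - s)) f))" for j s
  have "0 = (DB ^^ b) (\<Sum>j\<le>r. P j * (DA ^^ j) f)"
    using ann by simp
  also have "\<dots> = (\<Sum>j\<le>r. \<Sum>s\<le>b. T j s)"
    by (simp add: DB.iter_sum DB.leibniz T_def iter_commute)
  also have "\<dots> = (\<Sum>j<r. \<Sum>s\<le>b. T j s) + (\<Sum>s\<le>b. T r s)"
    by (simp flip: lessThan_Suc_atMost)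
  also have "(\<Sum>s\<le>b. T r s) = T r 0 + (\<Sum>s<b. T r (Suc s))"
    by (rule sum.atMost_shift)
  finally have "T r 0 = - ((\<Sum>j<r. \<Sum>s\<le>b. T j s) + (\<Sum>s<b. T r (Suc s)))"
    by (simp add: add_eq_0_iff algebra_simps)
  then have "l ^ b * T r 0 = - ((\<Sum>j<r. \<Sum>s\<le>b. l ^ b * T j s) + (\<Sum>s<b. l ^ b * T r (Suc s)))"
    by (simp add: sum_distrib_left right_diff_distrib)
  moreover have "l ^ (b + 1) * (DA ^^ r) ((DB ^^ b) f) = l ^ b * T r 0"
    by (simp add: T_def l_def mult_ac)
  ultimately have main: "l ^ (b + 1) * (DA ^^ r) ((DB ^^ b) f) =
      - ((\<Sum>j<r. \<Sum>s\<le>b. l ^ b * T j s) + (\<Sum>s<b. l ^ b * T r (Suc s)))"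
    by simp
  have lower: "l ^ b * T j s \<in> vs.span (lower_terms DA DB l r d f b)" if "j < r" "s \<le> b" for j s
    using lower_terms_binomial_term[OF deg that] by (simp add: T_def l_def)
  have leading: "l ^ b * T r (Suc s) \<in> vs.span (lower_terms DA DB l r d f b)" if "s < b" for s
  proof -
    have "b = s + (b - Suc s + 1)"
      using that by simp
    then have "l ^ b = l ^ s * l ^ (b - Suc s + 1)"
      by (metis power_add)
    then have "l ^ b * T r (Suc s) =
        (of_nat (b choose Suc s) * (l ^ s * (DB ^^ Suc s) l)) * (l ^ (b - Suc s + 1) * (DA ^^ r) ((DB ^^ (b - Suc s)) f))"
      by (simp add: T_def l_def algebra_simps)
    moreover have "l ^ (b - Suc s + 1) * (DA ^^ r) ((DB ^^ (b - Suc s)) f) \<in> vs.span (lower_terms DA DB l r d f (b - Suc s))"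
      using less[of "b - Suc s"] that by (simp add: l_def)
    moreover have "tdeg_le (l ^ s * (DB ^^ Suc s) l) (s * d + d)"
      by (intro tdeg_le_mult tdeg_le_power DB.iter_tdeg_le) (auto simp: l_def deg)
    then have "tdeg_le (of_nat (b choose Suc s) * (l ^ s * (DB ^^ Suc s) l)) ((b - (b - Suc s)) * d)"
      using that by (intro tdeg_le_of_nat_mult) (simp add: algebra_simps)
    ultimately show ?thesis
      by (metis lower_terms_mult diff_le_self)
  qed
  show ?case
    unfolding l_def[symmetric] main using lower leading by (intro vs.span_neg vs.span_add vs.span_sum) auto
qed

lemma leading_normal_term:
  assumes z: "z \<in> lower_terms DA DB lA rA d f j" and j: "j < rB"
    and m: "tdeg_le m (B + (rB - 1 - j) * d)" and lB: "tdeg_le lB d"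
  shows "m * lB ^ rA * z \<in> vs.span (normal_terms DA DB lA lB rA rB d f (B + 2 * d))"
proof -
  obtain c b' \<alpha> where z: "z = c * lA ^ b' * (DA ^^ \<alpha>) ((DB ^^ b') f)" "b' \<le> j" "\<alpha> < rA"
      "tdeg_le c ((j - b' + 1) * d)"
    using z unfolding lower_terms_def by blast
  have "lB ^ rA = lB ^ (rA - \<alpha>) * lB ^ \<alpha>"
    using z(3) by (simp flip: power_add)
  then have eq: "m * lB ^ rA * z = (m * lB ^ (rA - \<alpha>) * c) * lA ^ b' * lB ^ \<alpha> * (DA ^^ \<alpha>) ((DB ^^ b') f)"
    by (simp add: z(1) algebra_simps)
  have "rB - 1 - j + (j - b') = rB - 1 - b'"
    using z(2) j by arith
  then have e1: "(rB - 1 - j) * d + (j - b') * d = (rB - 1 - b') * d"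
    by (metis add_mult_distrib)
  have "rA - \<alpha> = Suc (rA - 1 - \<alpha>)"
    using z(3) by arith
  then have e2: "(rA - \<alpha>) * d = d + (rA - 1 - \<alpha>) * d"
    by simp
  have "tdeg_le (m * lB ^ (rA - \<alpha>) * c) ((B + (rB - 1 - j) * d) + (rA - \<alpha>) * d + (j - b' + 1) * d)"
    by (intro tdeg_le_mult m tdeg_le_power lB z(4))
  then have "tdeg_le (m * lB ^ (rA - \<alpha>) * c) ((B + 2 * d) + (rB - 1 - b') * d + (rA - 1 - \<alpha>) * d)"
    by (rule tdeg_le_mono) (use e1 e2 in simp)
  then show ?thesis
    unfolding eq using z(2,3) j by (intro normal_terms_spanI) auto
qed

text \<open>The weights (rB - 1 - j) * d + (rA - 1 - i) * d in normal_terms are chosen so that trading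
  a leading term lA^(j+1) * DA^rA DB^j f for lower ones costs no more degree than lA * lB supplies.\<close>
lemma normal_terms_raise_order:
  assumes lA: "tdeg_le lA d" and lB: "tdeg_le lB d"
    and red: "\<And>b. b < rB \<Longrightarrow> lA ^ (b + 1) * (DA ^^ rA) ((DB ^^ b) f) \<in> vs.span (lower_terms DA DB lA rA d f b)"
    and y: "i < rA" "j < rB" and m: "tdeg_le m (B + (rB - 1 - j) * d + (rA - 1 - i) * d)"
  shows "lA * lB * m * lA ^ j * lB ^ i * (DA ^^ Suc i) ((DB ^^ j) f)
    \<in> vs.span (normal_terms DA DB lA lB rA rB d f (B + 2 * d))"
proof (cases "Suc i < rA")
  case True
  have "rA - 1 - i = Suc (rA - 1 - Suc i)"
    using True by arith
  then have "(rA - 1 - i) * d = d + (rA - 1 - Suc i) * d"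
    by simp
  then have "tdeg_le (m * lA) ((B + 2 * d) + (rB - 1 - j) * d + (rA - 1 - Suc i) * d)"
    using tdeg_le_mult[OF m lA] by (rule_tac tdeg_le_mono) auto
  then have "(m * lA) * lA ^ j * lB ^ Suc i * (DA ^^ Suc i) ((DB ^^ j) f) \<in> vs.span (normal_terms DA DB lA lB rA rB d f (B + 2 * d))"
    by (rule normal_terms_spanI[OF True y(2)])
  then show ?thesis
    by (simp add: algebra_simps)
next
  case False
  then have i: "Suc i = rA"
    using y(1) by simp
  have "m * lB ^ rA * (lA ^ (j + 1) * (DA ^^ rA) ((DB ^^ j) f)) \<in> vs.span (normal_terms DA DB lA lB rA rB d f (B + 2 * d))"
    using m i by (intro span_mult[OF red[OF y(2)]] leading_normal_term[OF _ y(2) _ lB]) auto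
  then show ?thesis
    by (simp add: algebra_simps flip: i)
qed

lemma normal_terms_derivative:
  assumes lA: "tdeg_le lA d" and lB: "tdeg_le lB d"
    and red: "\<And>b. b < rB \<Longrightarrow> lA ^ (b + 1) * (DA ^^ rA) ((DB ^^ b) f) \<in> vs.span (lower_terms DA DB lA rA d f b)"
    and x: "x \<in> vs.span (normal_terms DA DB lA lB rA rB d f B)"
  shows "lA * lB * DA x \<in> vs.span (normal_terms DA DB lA lB rA rB d f (B + 2 * d))"
proof (rule span_map[OF x, where \<phi> = "\<lambda>x. lA * lB * DA x"])
  fix c y z
  show "lA * lB * DA (cscale c y + z) = cscale c (lA * lB * DA y) + lA * lB * DA z"
    by (simp add: DA.add DA.cscale mult_cscale_add)
next
  let ?W = "vs.span (normal_terms DA DB lA lB rA rB d f (B + 2 * d))"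
  fix y
  assume "y \<in> normal_terms DA DB lA lB rA rB d f B"
  then obtain m i j where y: "y = m * lA ^ j * lB ^ i * (DA ^^ i) ((DB ^^ j) f)" "i < rA" "j < rB"
      and m: "tdeg_le m (B + (rB - 1 - j) * d + (rA - 1 - i) * d)"
    unfolding normal_terms_def by blast
  define M where "M = lA * lB * DA m + of_nat j * lB * DA lA * m + of_nat i * lA * DA lB * m"
  have "tdeg_le M (d + d + (B + (rB - 1 - j) * d + (rA - 1 - i) * d))"
    unfolding M_def using m lA lB
    by (intro tdeg_le_add tdeg_le_mult tdeg_le_of_nat_mult DA.tdeg_le; simp add: mult.assoc add.assoc)
  then have "tdeg_le M ((B + 2 * d) + (rB - 1 - j) * d + (rA - 1 - i) * d)"
    by (rule tdeg_le_mono) linarith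
  then have first: "M * lA ^ j * lB ^ i * (DA ^^ i) ((DB ^^ j) f) \<in> ?W"
    by (rule normal_terms_spanI[OF y(2,3)])
  have second: "lA * lB * m * lA ^ j * lB ^ i * (DA ^^ Suc i) ((DB ^^ j) f) \<in> ?W"
    using normal_terms_raise_order[OF lA lB red y(2,3) m] .
  show "lA * lB * DA y \<in> ?W"
    unfolding y(1) DA.mult_powers_product M_def[symmetric] using vs.span_add[OF first second] by simp
qed simp

end

interpretation D12: commuting_derivations D1 D2
  by unfold_locales (rule D1_D2_commute)

interpretation D21: commuting_derivations D2 D1
  by unfold_locales (rule D1_D2_commute[symmetric])

section \<open>The ansatz\<close>

lemma poly2_to_fps2_nth [simp]: "poly2_to_fps2 p $ i $ j = coeff (coeff p i) j"
  by (simp add: poly2_to_fps2_def)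

lemma poly2_to_fps2_nonzero: "p \<noteq> 0 \<Longrightarrow> poly2_to_fps2 p \<noteq> 0"
  by (metis leading_coeff_0_iff poly2_to_fps2_nth fps_zero_nth)

lemma finite_tdeg2_support: "finite {i + j | i j. coeff (coeff (p :: 'a::zero poly poly) i) j \<noteq> 0}"
proof -
  let ?M = "Max ((\<lambda>i. degree (coeff p i)) ` {..degree p})"
  have "{i + j | i j. coeff (coeff p i) j \<noteq> 0} \<subseteq> (\<lambda>(i, j). i + j) ` ({..degree p} \<times> {..?M})"
  proof
    fix x
    assume "x \<in> {i + j | i j. coeff (coeff p i) j \<noteq> 0}"
    then obtain i j where x: "x = i + j" "coeff (coeff p i) j \<noteq> 0"
      by blast
    then have i: "i \<le> degree p"
      by (metis coeff_0 le_degree)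
    have "j \<le> degree (coeff p i)"
      using x(2) by (simp add: le_degree)
    also have "\<dots> \<le> ?M"
      using i by (intro Max_ge) auto
    finally show "x \<in> (\<lambda>(i, j). i + j) ` ({..degree p} \<times> {..?M})"
      using i x(1) by auto
  qed
  then show ?thesis
    by (rule finite_subset) auto
qed

lemma tdeg_le_poly2_to_fps2: "tdeg_le (poly2_to_fps2 p) (tdeg2 p)"
  unfolding tdeg_le_def tdeg2_def using finite_tdeg2_support[of p] by (auto intro!: Max_ge)

lemma tdeg2_le_op_deg2: "x \<in> set L \<Longrightarrow> tdeg2 x \<le> op_deg2 L"
  unfolding op_deg2_def by (intro Max_ge) auto

text \<open>euler_prod f k = (\<theta> - k) \<cdots> (\<theta> - 1) f with the Euler operator
  \<theta> = x2 D2 - x1 D1, which multiplies x1^p x2^q by q - p and therefore vanishes on the diagonal.\<close>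
fun euler_prod :: "'a::field fps fps \<Rightarrow> nat \<Rightarrow> 'a fps fps" where
  "euler_prod f 0 = f"
| "euler_prod f (Suc k) = fps_Y * D2 (euler_prod f k) - fps_X * D1 (euler_prod f k) - of_nat (Suc k) * euler_prod f k"

definition ansatz_term :: "'a::field fps fps \<Rightarrow> nat \<Rightarrow> nat \<Rightarrow> nat \<Rightarrow> nat \<Rightarrow> 'a fps fps" where
  "ansatz_term f N a i k = fps_X ^ a * (fps_Y ^ (a + 2 * N - i - k) * (D1 ^^ i) (euler_prod f k))"

locale bivariate_annihilators =
  fixes f :: "'a::field_char_0 fps fps" and L1 L2 :: "'a poly poly list" and d :: nat
  assumes nonzero1: "op_nonzero L1" and nonzero2: "op_nonzero L2"
    and annihilates1: "apply_op_x1 L1 f = 0" and annihilates2: "apply_op_x2 L2 f = 0"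
    and degree1: "op_deg2 L1 \<le> d" and degree2: "op_deg2 L2 \<le> d"
    and series_nonzero: "f \<noteq> 0"
begin

definition "r1 = length L1 - 1"
definition "r2 = length L2 - 1"
definition "l1 = poly2_to_fps2 (last L1)"
definition "l2 = poly2_to_fps2 (last L2)"
definition "lead_prod = l1 * l2"
definition "W B = vs.span (normal_terms D1 D2 l1 l2 r1 r2 d f B)"

lemma length1: "length L1 = Suc r1"
  using nonzero1 by (simp add: op_nonzero_def r1_def)

lemma length2: "length L2 = Suc r2"
  using nonzero2 by (simp add: op_nonzero_def r2_def)

lemma relation1: "(\<Sum>j\<le>r1. poly2_to_fps2 (L1 ! j) * (D1 ^^ j) f) = 0"
  using annihilates1 by (simp add: apply_op_x1_def length1 lessThan_Suc_atMost)

lemma relation2: "(\<Sum>j\<le>r2. poly2_to_fps2 (L2 ! j) * (D2 ^^ j) f) = 0"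
  using annihilates2 by (simp add: apply_op_x2_def length2 lessThan_Suc_atMost)

lemma last1: "poly2_to_fps2 (L1 ! r1) = l1"
  using nonzero1 by (simp add: l1_def last_conv_nth op_nonzero_def r1_def)

lemma last2: "poly2_to_fps2 (L2 ! r2) = l2"
  using nonzero2 by (simp add: l2_def last_conv_nth op_nonzero_def r2_def)

lemma l1_nonzero: "l1 \<noteq> 0"
  using nonzero1 by (simp add: l1_def op_nonzero_def poly2_to_fps2_nonzero)

lemma l2_nonzero: "l2 \<noteq> 0"
  using nonzero2 by (simp add: l2_def op_nonzero_def poly2_to_fps2_nonzero)

lemma tdeg_le_coeff1: "j \<le> r1 \<Longrightarrow> tdeg_le (poly2_to_fps2 (L1 ! j)) d"
  using length1 degree1 tdeg2_le_op_deg2[of "L1 ! j" L1]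
  by (intro tdeg_le_mono[OF tdeg_le_poly2_to_fps2]) auto

lemma tdeg_le_coeff2: "j \<le> r2 \<Longrightarrow> tdeg_le (poly2_to_fps2 (L2 ! j)) d"
  using length2 degree2 tdeg2_le_op_deg2[of "L2 ! j" L2]
  by (intro tdeg_le_mono[OF tdeg_le_poly2_to_fps2]) auto

lemma tdeg_le_l1: "tdeg_le l1 d"
  using tdeg_le_coeff1[of r1] last1 by simp

lemma tdeg_le_l2: "tdeg_le l2 d"
  using tdeg_le_coeff2[of r2] last2 by simp

lemma tdeg_le_lead_prod: "tdeg_le lead_prod (2 * d)"
  using tdeg_le_mult[OF tdeg_le_l1 tdeg_le_l2] by (simp add: lead_prod_def mult_2)

lemma lead_prod_nonzero: "lead_prod \<noteq> 0"
  using l1_nonzero l2_nonzero by (simp add: lead_prod_def)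

lemma r1_pos: "0 < r1"
  using relation1 last1 l1_nonzero series_nonzero by (cases r1) auto

lemma r2_pos: "0 < r2"
  using relation2 last2 l2_nonzero series_nonzero by (cases r2) auto

lemma W_D1: "x \<in> W B \<Longrightarrow> lead_prod * D1 x \<in> W (B + 2 * d)"
  unfolding W_def lead_prod_def
  using D12.leading_term_reduction[of r1 "\<lambda>j. poly2_to_fps2 (L1 ! j)"] tdeg_le_coeff1 relation1
  by (intro D12.normal_terms_derivative tdeg_le_l1 tdeg_le_l2) (auto simp: last1)

lemma W_D2: "x \<in> W B \<Longrightarrow> lead_prod * D2 x \<in> W (B + 2 * d)"
  unfolding W_def lead_prod_def D12.normal_terms_swap mult.commute[of l1 l2]
  using D21.leading_term_reduction[of r2 "\<lambda>j. poly2_to_fps2 (L2 ! j)"] tdeg_le_coeff2 relation2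
  by (intro D21.normal_terms_derivative tdeg_le_l1 tdeg_le_l2) (auto simp: last2)

lemma W_mult: "x \<in> W B \<Longrightarrow> tdeg_le q e \<Longrightarrow> q * x \<in> W (B + e)"
  unfolding W_def by (rule normal_terms_mult)

lemma W_mono: "x \<in> W B \<Longrightarrow> B \<le> B' \<Longrightarrow> x \<in> W B'"
  unfolding W_def using normal_terms_span_mono by blast

lemma W_diff: "x \<in> W B \<Longrightarrow> y \<in> W B \<Longrightarrow> x - y \<in> W B"
  unfolding W_def by (rule vs.span_diff)

lemma series_in_W: "f \<in> W 0"
  unfolding W_def
  using normal_terms_spanI[OF r1_pos r2_pos, where m = 1 and B = 0 and d = d and lA = l1 and lB = l2 and DA = D1 and DB = D2 and f = f]
  by simp

lemma lead_power_derivative_in_W: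
  assumes D: "D = D1 \<or> D = D2" and h: "lead_prod ^ j * h \<in> W B"
  shows "lead_prod ^ (j + 1) * D h \<in> W (B + 2 * d)"
proof -
  interpret bivariate_derivation D
    using D D1.bivariate_derivation_axioms D2.bivariate_derivation_axioms by blast
  have "lead_prod * D (lead_prod ^ j * h) = (lead_prod * D (lead_prod ^ j)) * h + lead_prod ^ (j + 1) * D h"
    by (simp add: mult algebra_simps)
  also have "lead_prod * D (lead_prod ^ j) = of_nat j * D lead_prod * lead_prod ^ j"
    by (rule mult_power)
  finally have eq: "lead_prod ^ (j + 1) * D h = lead_prod * D (lead_prod ^ j * h) - (of_nat j * D lead_prod) * (lead_prod ^ j * h)"
    by (simp add: algebra_simps)
  have "tdeg_le (of_nat j * D lead_prod) (2 * d)"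
    by (intro tdeg_le_of_nat_mult tdeg_le tdeg_le_lead_prod)
  then show ?thesis
    unfolding eq using D W_D1 W_D2 h by (blast intro: W_diff W_mult)
qed

lemma lead_power_euler_prod_in_W: "lead_prod ^ k * euler_prod f k \<in> W (k * (2 * d + 1))"
proof (induction k)
  case 0
  show ?case
    using series_in_W by simp
next
  case (Suc k)
  let ?B = "k * (2 * d + 1)" and ?h = "euler_prod f k"
  have "fps_Y * (lead_prod ^ (k + 1) * D2 ?h) \<in> W (?B + 2 * d + 1)"
    by (rule W_mult[OF lead_power_derivative_in_W[OF _ Suc] tdeg_le_Y]) simp
  moreover have "fps_X * (lead_prod ^ (k + 1) * D1 ?h) \<in> W (?B + 2 * d + 1)"
    by (rule W_mult[OF lead_power_derivative_in_W[OF _ Suc] tdeg_le_X]) simp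
  moreover have "(of_nat (Suc k) * lead_prod) * (lead_prod ^ k * ?h) \<in> W (?B + 2 * d + 1)"
    using W_mult[OF Suc tdeg_le_of_nat_mult[OF tdeg_le_lead_prod]] by (rule W_mono) simp
  moreover have "lead_prod ^ Suc k * euler_prod f (Suc k) =
      fps_Y * (lead_prod ^ (k + 1) * D2 ?h) - fps_X * (lead_prod ^ (k + 1) * D1 ?h)
      - (of_nat (Suc k) * lead_prod) * (lead_prod ^ k * ?h)"
    by (simp add: algebra_simps)
  ultimately have "lead_prod ^ Suc k * euler_prod f (Suc k) \<in> W (?B + 2 * d + 1)"
    by (simp add: W_diff)
  then show ?case
    by (simp add: algebra_simps)
qed

lemma lead_power_iter_D1_euler_prod_in_W:
  "lead_prod ^ (k + i) * (D1 ^^ i) (euler_prod f k) \<in> W (k * (2 * d + 1) + i * (2 * d))"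
proof (induction i)
  case 0
  show ?case
    using lead_power_euler_prod_in_W by simp
next
  case (Suc i)
  show ?case
    using lead_power_derivative_in_W[OF _ Suc, of D1] by (simp add: algebra_simps)
qed

lemma lead_power_ansatz_term_in_W:
  assumes "a \<le> N" "i \<le> N" "k \<le> N"
  shows "lead_prod ^ (2 * N) * ansatz_term f N a i k \<in> W (4 * N * d + 4 * N)"
proof -
  define s where "s = 2 * N - (k + i)"
  have s: "k + i + s = 2 * N"
    using assms by (simp add: s_def)
  have "lead_prod ^ (2 * N) = lead_prod ^ s * lead_prod ^ (k + i)"
    by (simp flip: power_add s add.commute)
  then have eq: "lead_prod ^ (2 * N) * ansatz_term f N a i k =
      (lead_prod ^ s * fps_X ^ a * fps_Y ^ (a + 2 * N - i - k)) * (lead_prod ^ (k + i) * (D1 ^^ i) (euler_prod f k))"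
    by (simp add: ansatz_term_def algebra_simps)
  have "tdeg_le (lead_prod ^ s * fps_X ^ a * fps_Y ^ (a + 2 * N - i - k)) (s * (2 * d) + a * 1 + (a + 2 * N - i - k) * 1)"
    by (intro tdeg_le_mult tdeg_le_power tdeg_le_lead_prod tdeg_le_X tdeg_le_Y)
  from W_mult[OF lead_power_iter_D1_euler_prod_in_W this]
  have "lead_prod ^ (2 * N) * ansatz_term f N a i k
      \<in> W (k * (2 * d + 1) + i * (2 * d) + (s * (2 * d) + a * 1 + (a + 2 * N - i - k) * 1))"
    unfolding eq .
  moreover have "k * (2 * d + 1) + i * (2 * d) + s * (2 * d) = (k + i + s) * (2 * d) + k"
    by (simp add: algebra_simps)
  then have "k * (2 * d + 1) + i * (2 * d) + s * (2 * d) = 4 * N * d + k"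
    by (simp add: s)
  ultimately show ?thesis
    using assms by (elim W_mono) linarith
qed

definition monomial_terms :: "nat \<Rightarrow> 'a fps fps set" where
  "monomial_terms M = (\<lambda>(u, v, i, j). fps_X ^ u * fps_Y ^ v * (l1 ^ j * l2 ^ i * (D1 ^^ i) ((D2 ^^ j) f)))
     ` ({..M} \<times> {..M} \<times> {..<r1} \<times> {..<r2})"

lemma card_monomial_terms: "card (monomial_terms M) \<le> (M + 1) * ((M + 1) * (r1 * r2))"
proof -
  have "card (monomial_terms M) \<le> card ({..M} \<times> {..M} \<times> {..<r1} \<times> {..<r2})"
    unfolding monomial_terms_def by (rule card_image_le) simp
  then show ?thesis
    by (simp add: card_cartesian_product)
qed

lemma W_subset_span_monomial_terms: "W B \<subseteq> vs.span (monomial_terms (B + (r1 + r2) * d))"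
  unfolding W_def
proof (rule vs.span_minimal[OF _ vs.subspace_span], rule subsetI)
  let ?M = "B + (r1 + r2) * d"
  fix y
  assume "y \<in> normal_terms D1 D2 l1 l2 r1 r2 d f B"
  then obtain m i j where y: "y = m * l1 ^ j * l2 ^ i * (D1 ^^ i) ((D2 ^^ j) f)" "i < r1" "j < r2"
      "tdeg_le m (B + (r2 - 1 - j) * d + (r1 - 1 - i) * d)"
    unfolding normal_terms_def by blast
  have "(r2 - 1 - j) * d \<le> r2 * d" "(r1 - 1 - i) * d \<le> r1 * d"
    by simp_all
  then have m: "tdeg_le m ?M"
    using y(4) by (elim tdeg_le_mono) (simp add: algebra_simps)
  let ?R = "l1 ^ j * l2 ^ i * (D1 ^^ i) ((D2 ^^ j) f)"
  have "y = (\<Sum>u\<le>?M. \<Sum>v\<le>?M. cscale (m $ u $ v) (fps_X ^ u * fps_Y ^ v)) * ?R"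
    using tdeg_le_monomial_expansion[OF m] by (simp add: y(1) algebra_simps)
  also have "\<dots> = (\<Sum>u\<le>?M. \<Sum>v\<le>?M. cscale (m $ u $ v) (fps_X ^ u * fps_Y ^ v * ?R))"
    by (simp add: sum_distrib_right cscale_def mult.assoc)
  also have "\<dots> \<in> vs.span (monomial_terms ?M)"
  proof (intro vs.span_sum vs.span_scale vs.span_base)
    fix u v
    assume "u \<in> {..?M}" "v \<in> {..?M}"
    then show "fps_X ^ u * fps_Y ^ v * ?R \<in> monomial_terms ?M"
      unfolding monomial_terms_def using y(2,3) by (intro image_eqI[of _ _ "(u, v, i, j)"]) auto
  qed
  finally show "y \<in> vs.span (monomial_terms ?M)" .
qed

text \<open>The left-hand side of the assumption bounds the dimension of a space containing all
  lead_prod^(2N) * ansatz_term f N a i k.\<close>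
lemma ansatz_relation:
  assumes "(4 * N * d + 4 * N + (r1 + r2) * d + 1) * ((4 * N * d + 4 * N + (r1 + r2) * d + 1) * (r1 * r2))
      < (N + 1) * ((N + 1) * (N + 1))"
  shows "\<exists>c. (\<exists>a\<le>N. \<exists>i\<le>N. \<exists>k\<le>N. c a i k \<noteq> 0) \<and>
    (\<Sum>a\<le>N. \<Sum>i\<le>N. \<Sum>k\<le>N. cscale (c a i k) (ansatz_term f N a i k)) = 0"
proof -
  let ?I = "{..N} \<times> {..N} \<times> {..N}" and ?M = "4 * N * d + 4 * N + (r1 + r2) * d"
  let ?G = "\<lambda>x. ansatz_term f N (fst x) (fst (snd x)) (snd (snd x))"
  let ?F = "\<lambda>x. lead_prod ^ (2 * N) * ?G x"
  have "card (monomial_terms ?M) < card ?I"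
    using card_monomial_terms[of ?M] assms by (simp add: card_cartesian_product)
  moreover have "?F x \<in> vs.span (monomial_terms ?M)" if "x \<in> ?I" for x
    using that lead_power_ansatz_term_in_W W_subset_span_monomial_terms by fastforce
  ultimately obtain c where c: "\<exists>x\<in>?I. c x \<noteq> 0" "(\<Sum>x\<in>?I. cscale (c x) (?F x)) = 0"
    using vs.exists_nontrivial_relation[of ?I "monomial_terms ?M" ?F]
    by (auto simp: monomial_terms_def)
  have "(\<Sum>x\<in>?I. cscale (c x) (?F x)) = lead_prod ^ (2 * N) * (\<Sum>x\<in>?I. cscale (c x) (?G x))"
    by (simp add: sum_distrib_left cscale_def mult.left_commute)
  also have "(\<Sum>x\<in>?I. cscale (c x) (?G x)) =
      (\<Sum>a\<le>N. \<Sum>i\<le>N. \<Sum>k\<le>N. cscale (c (a, i, k)) (ansatz_term f N a i k))"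
    by (simp add: sum.cartesian_product split_def)
  finally have "(\<Sum>x\<in>?I. cscale (c x) (?F x)) =
      lead_prod ^ (2 * N) * (\<Sum>a\<le>N. \<Sum>i\<le>N. \<Sum>k\<le>N. cscale (c (a, i, k)) (ansatz_term f N a i k))" .
  then show ?thesis
    using c lead_prod_nonzero by (intro exI[of _ "\<lambda>a i k. c (a, i, k)"]) auto
qed

end

section \<open>An annihilating operator for the diagonal\<close>

lemma iter_fps_deriv_nth: "((fps_deriv ^^ i) (u :: 'a::field fps)) $ n = pochhammer (of_nat (n + 1)) i * u $ (n + i)"
proof (induction i arbitrary: n)
  case (Suc i)
  have "((fps_deriv ^^ Suc i) u) $ n = of_nat (n + 1) * ((fps_deriv ^^ i) u) $ (n + 1)"
    by simp
  also have "\<dots> = of_nat (n + 1) * (pochhammer (of_nat (n + 1) + 1) i * u $ (n + Suc i))"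
    by (simp add: Suc)
  also have "\<dots> = pochhammer (of_nat (n + 1)) (Suc i) * u $ (n + Suc i)"
    by (simp add: pochhammer_rec)
  finally show ?case .
qed simp

lemma iter_D1_nth_nth: "((D1 ^^ i) (H :: 'a::field fps fps)) $ p $ q = pochhammer (of_nat (p + 1)) i * H $ (p + i) $ q"
proof (induction i arbitrary: p)
  case (Suc i)
  have "((D1 ^^ Suc i) H) $ p $ q = of_nat (p + 1) * (pochhammer (of_nat (p + 1) + 1) i * H $ (p + Suc i) $ q)"
    by (simp add: D1_nth_nth Suc)
  then show ?case
    by (simp add: pochhammer_rec)
qed simp

lemma euler_prod_nth: "euler_prod f k $ p $ q = (\<Prod>m\<in>{1..k}. (of_nat q - of_nat p - of_nat m :: 'a::field)) * f $ p $ q"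
proof (induction k)
  case (Suc k)
  have "(fps_Y * D2 (euler_prod f k)) $ p $ q = of_nat q * euler_prod f k $ p $ q"
    by (cases q) (simp_all add: fps_Y_mult_nth D2_nth_nth)
  moreover have "(fps_X * D1 (euler_prod f k)) $ p $ q = of_nat p * euler_prod f k $ p $ q"
    by (cases p) (simp_all add: D1_nth_nth)
  ultimately have "euler_prod f (Suc k) $ p $ q = (of_nat q - of_nat p - of_nat (Suc k)) * euler_prod f k $ p $ q"
    by (simp add: of_nat_mult_eq_cscale algebra_simps)
  then show ?case
    by (simp add: Suc prod.cl_ivl_Suc algebra_simps)
qed simp

lemma ansatz_term_nth:
  "ansatz_term f N a i k $ p $ q = (if a \<le> p \<and> a + 2 * N - i - k \<le> q then
     pochhammer (of_nat (p - a + 1)) i *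
     (\<Prod>m\<in>{1..k}. (of_nat (q - (a + 2 * N - i - k)) - of_nat (p - a + i) - of_nat m :: 'a::field)) *
     f $ (p - a + i) $ (q - (a + 2 * N - i - k)) else 0)"
  by (simp add: ansatz_term_def fps_X_Y_power_mult_nth iter_D1_nth_nth euler_prod_nth)

text \<open>On the coefficient of x1^n x2^(n + 2N - k0), the x2-degree exceeds the x1-degree of the
  underlying coefficient of f by exactly k - k0, which is a root of the product in
  euler_prod unless k = k0; so only the ansatz terms with k = k0 survive, and they see the
  diagonal of f.\<close>
lemma ansatz_term_nth_shifted_diagonal:
  assumes "i \<le> N" "k \<le> N" "k0 \<le> k"
  shows "ansatz_term f N a i k $ n $ (n + 2 * N - k0) = (if k = k0 \<and> a \<le> n then
     pochhammer (of_nat (n - a + 1)) i * (\<Prod>m\<in>{1..k0}. - of_nat m) * f $ (n - a + i) $ (n - a + i) else 0)"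
proof (cases "a \<le> n")
  case True
  have q: "n + 2 * N - k0 - (a + 2 * N - i - k) = (n - a + i) + (k - k0)"
    using True assms by linarith
  have "(\<Prod>m\<in>{1..k}. (of_nat ((n - a + i) + (k - k0)) - of_nat (n - a + i) - of_nat m :: 'a))
      = (\<Prod>m\<in>{1..k}. of_nat (k - k0) - of_nat m)"
    by (simp add: algebra_simps)
  also have "\<dots> = 0" if "k \<noteq> k0"
    using that assms by (intro prod_zero) (auto intro!: bexI[of _ "k - k0"])
  finally show ?thesis
    using True assms by (cases "k = k0") (simp_all add: ansatz_term_nth q)
qed (simp add: ansatz_term_nth)

lemma apply_op1_column_polys_nth:
  "apply_op1 (map (\<lambda>i. \<Sum>a\<le>N. monom (c a i) a) [0..<n]) u $ m =
    (\<Sum>i<n. \<Sum>a\<le>N. if a \<le> m then c a i * pochhammer (of_nat (m - a + 1)) i * u $ (m - a + i) else 0)"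
proof -
  have "(\<Sum>j=0..m. coeff (\<Sum>a\<le>N. monom (c a i) a) j * ((fps_deriv ^^ i) u) $ (m - j)) =
      (\<Sum>a\<le>N. if a \<le> m then c a i * pochhammer (of_nat (m - a + 1)) i * u $ (m - a + i) else 0)" for i
  proof -
    have "(\<Sum>j=0..m. coeff (\<Sum>a\<le>N. monom (c a i) a) j * ((fps_deriv ^^ i) u) $ (m - j))
        = (\<Sum>j=0..m. if j \<le> N then c j i * pochhammer (of_nat (m - j + 1)) i * u $ (m - j + i) else 0)"
      by (rule sum.cong[OF refl]) (simp add: coeff_sum coeff_monom iter_fps_deriv_nth)
    also have "\<dots> = (\<Sum>j\<in>{j\<in>{0..m}. j \<le> N}. c j i * pochhammer (of_nat (m - j + 1)) i * u $ (m - j + i))"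
      by (rule sum.inter_filter[symmetric]) simp
    also have "{j\<in>{0..m}. j \<le> N} = {a\<in>{..N}. a \<le> m}"
      by auto
    also have "(\<Sum>j\<in>{a\<in>{..N}. a \<le> m}. c j i * pochhammer (of_nat (m - j + 1)) i * u $ (m - j + i)) =
        (\<Sum>a\<le>N. if a \<le> m then c a i * pochhammer (of_nat (m - a + 1)) i * u $ (m - a + i) else 0)"
      by (rule sum.inter_filter) simp
    finally show ?thesis .
  qed
  then show ?thesis
    by (simp add: apply_op1_def fps_sum_nth fps_mult_nth)
qed

text \<open>c a i becomes the coefficient of x^a D^i of the operator.\<close>
lemma annihilator_of_recurrence:
  fixes c :: "nat \<Rightarrow> nat \<Rightarrow> 'a::field"
  assumes nonzero: "\<exists>a\<le>N. \<exists>i\<le>N. c a i \<noteq> 0"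
    and recurrence: "\<And>m. (\<Sum>a\<le>N. \<Sum>i\<le>N. if a \<le> m then c a i * pochhammer (of_nat (m - a + 1)) i * u $ (m - a + i) else 0) = 0"
  shows "\<exists>P. op_nonzero P \<and> apply_op1 P u = 0 \<and> op_deg1 P \<le> N \<and> op_ord P \<le> N"
proof -
  define I where "I = {i. i \<le> N \<and> (\<exists>a\<le>N. c a i \<noteq> 0)}"
  define r where "r = Max I"
  have "finite I" "I \<noteq> {}"
    using nonzero by (auto simp: I_def)
  then have r: "r \<in> I" and above: "\<And>i. i \<in> I \<Longrightarrow> i \<le> r"
    by (simp_all add: r_def)
  have zero_column: "c a i = 0" if "a \<le> N" "i \<le> N" "r < i" for a i
    using above[of i] that unfolding I_def by force
  define p where "p i = (\<Sum>a\<le>N. monom (c a i) a)" for i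
  define P where "P = map p [0..<Suc r]"
  have coeff_p: "coeff (p i) a = (if a \<le> N then c a i else 0)" for i a
    by (simp add: p_def coeff_sum coeff_monom)
  obtain a where "a \<le> N" "c a r \<noteq> 0"
    using r by (auto simp: I_def)
  then have "coeff (p r) a \<noteq> 0"
    by (simp add: coeff_p)
  then have "p r \<noteq> 0"
    by auto
  then have "op_nonzero P"
    by (simp add: op_nonzero_def P_def)
  moreover have "op_ord P \<le> N"
    using r by (simp add: op_ord_def P_def I_def)
  moreover have "op_deg1 P \<le> N"
    unfolding op_deg1_def P_def by (auto simp: coeff_p intro!: degree_le)
  moreover have "apply_op1 P u = 0"
  proof (rule fps_ext)
    fix m
    have "apply_op1 P u $ m =
        (\<Sum>i\<le>N. \<Sum>a\<le>N. if a \<le> m then c a i * pochhammer (of_nat (m - a + 1)) i * u $ (m - a + i) else 0)"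
      unfolding P_def p_def apply_op1_column_polys_nth
      using r zero_column by (intro sum.mono_neutral_left) (auto simp: I_def intro!: sum.neutral)
    also have "\<dots> = (\<Sum>a\<le>N. \<Sum>i\<le>N. if a \<le> m then c a i * pochhammer (of_nat (m - a + 1)) i * u $ (m - a + i) else 0)"
      by (rule sum.swap)
    also have "\<dots> = 0"
      by (rule recurrence)
    finally show "apply_op1 P u $ m = 0 $ m"
      by simp
  qed
  ultimately show ?thesis
    by blast
qed

lemma diagonal_annihilator_of_relation:
  fixes f :: "'a::field_char_0 fps fps"
  assumes nonzero: "\<exists>a\<le>N. \<exists>i\<le>N. \<exists>k\<le>N. c a i k \<noteq> 0"
    and relation: "(\<Sum>a\<le>N. \<Sum>i\<le>N. \<Sum>k\<le>N. cscale (c a i k) (ansatz_term f N a i k)) = 0"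
  shows "\<exists>P. op_nonzero P \<and> apply_op1 P (diag12 f) = 0 \<and> op_deg1 P \<le> N \<and> op_ord P \<le> N"
proof -
  define K where "K = {k. k \<le> N \<and> (\<exists>a\<le>N. \<exists>i\<le>N. c a i k \<noteq> 0)}"
  define k0 where "k0 = Min K"
  have "finite K" "K \<noteq> {}"
    using nonzero by (auto simp: K_def)
  then have k0: "k0 \<in> K" and below: "\<And>k. k \<in> K \<Longrightarrow> k0 \<le> k"
    by (simp_all add: k0_def)
  define \<pi> :: 'a where "\<pi> = (\<Prod>m\<in>{1..k0}. - of_nat m)"
  have "\<pi> \<noteq> 0"
    by (simp add: \<pi>_def)
  define R where "R m a i = (if a \<le> m then c a i k0 * pochhammer (of_nat (m - a + 1)) i * diag12 f $ (m - a + i) else 0)" for m a i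
  have "\<pi> * (\<Sum>a\<le>N. \<Sum>i\<le>N. R m a i) = 0" for m
  proof -
    have column: "(\<Sum>k\<le>N. c a i k * ansatz_term f N a i k $ m $ (m + 2 * N - k0)) = \<pi> * R m a i"
      if "a \<le> N" "i \<le> N" for a i
    proof -
      have "c a i k * ansatz_term f N a i k $ m $ (m + 2 * N - k0) = (if k = k0 then \<pi> * R m a i else 0)"
        if "k \<le> N" for k
        using that \<open>i \<le> N\<close> \<open>a \<le> N\<close> below[of k] ansatz_term_nth_shifted_diagonal[of i N k k0 f a m]
        by (cases "k0 \<le> k") (auto simp: K_def R_def \<pi>_def diag12_def)
      then show ?thesis
        using k0 by (simp add: K_def)
    qed
    have "0 = (\<Sum>a\<le>N. \<Sum>i\<le>N. \<Sum>k\<le>N. cscale (c a i k) (ansatz_term f N a i k)) $ m $ (m + 2 * N - k0)"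
      using relation by simp
    also have "\<dots> = (\<Sum>a\<le>N. \<Sum>i\<le>N. \<pi> * R m a i)"
      by (simp add: fps_sum_nth column)
    finally show ?thesis
      by (simp add: sum_distrib_left)
  qed
  then have "(\<Sum>a\<le>N. \<Sum>i\<le>N. R m a i) = 0" for m
    using \<open>\<pi> \<noteq> 0\<close> by simp
  moreover have "\<exists>a\<le>N. \<exists>i\<le>N. c a i k0 \<noteq> 0"
    using k0 by (simp add: K_def)
  ultimately show ?thesis
    by (intro annihilator_of_recurrence) (simp_all add: R_def)
qed

text \<open>For N = (11 d r)^2 the dimension bound is at most (11 N d)^2 r^2 = N^3.\<close>
lemma ansatz_count:
  fixes d r r1 r2 :: nat
  defines "N \<equiv> 121 * d ^ 2 * r ^ 2"
  assumes "1 \<le> d" "1 \<le> r" "r1 \<le> r" "r2 \<le> r"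
  shows "(4 * N * d + 4 * N + (r1 + r2) * d + 1) * ((4 * N * d + 4 * N + (r1 + r2) * d + 1) * (r1 * r2))
    < (N + 1) * ((N + 1) * (N + 1))"
proof -
  have "1 \<le> r * d"
    using assms by simp
  then have rd: "r * d \<le> N"
    unfolding N_def by (simp add: power2_eq_square)
  have "(r1 + r2) * d \<le> 2 * (r * d)"
    using assms by (simp add: add_mult_distrib mult_2 add_mono)
  moreover have "N \<le> N * d" "1 \<le> N"
    using assms \<open>1 \<le> r * d\<close> rd by simp_all
  ultimately have M: "4 * N * d + 4 * N + (r1 + r2) * d + 1 \<le> 11 * N * d"
    using rd by linarith
  have "(4 * N * d + 4 * N + (r1 + r2) * d + 1) * ((4 * N * d + 4 * N + (r1 + r2) * d + 1) * (r1 * r2))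
      \<le> (11 * N * d) * ((11 * N * d) * (r * r))"
    using M assms by (intro mult_le_mono mult_le_mono2) simp_all
  also have "\<dots> = N * (N * N)"
    by (simp add: N_def power2_eq_square algebra_simps)
  also have "\<dots> < (N + 1) * ((N + 1) * (N + 1))"
    by (intro mult_strict_mono) auto
  finally show ?thesis .
qed

lemma (in bivariate_annihilators) diagonal_annihilator:
  assumes "1 \<le> d" "r1 \<le> r" "r2 \<le> r"
  shows "\<exists>P. op_nonzero P \<and> apply_op1 P (diag12 f) = 0 \<and>
    op_deg1 P \<le> 121 * d ^ 2 * r ^ 2 \<and> op_ord P \<le> 121 * d ^ 2 * r ^ 2"
proof -
  have "1 \<le> r"
    using r1_pos assms by simp
  then obtain c where "\<exists>a\<le>121 * d ^ 2 * r ^ 2. \<exists>i\<le>121 * d ^ 2 * r ^ 2. \<exists>k\<le>121 * d ^ 2 * r ^ 2. c a i k \<noteq> 0"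
      "(\<Sum>a\<le>121 * d ^ 2 * r ^ 2. \<Sum>i\<le>121 * d ^ 2 * r ^ 2. \<Sum>k\<le>121 * d ^ 2 * r ^ 2.
         cscale (c a i k) (ansatz_term f (121 * d ^ 2 * r ^ 2) a i k)) = 0"
    using ansatz_relation[OF ansatz_count] assms by blast
  then show ?thesis
    by (rule diagonal_annihilator_of_relation)
qed

lemma diagonal_annihilator_bound:
  fixes g :: "'a::field_char_0 fps fps"
  assumes "op_nonzero M1" "op_nonzero M2" "apply_op_x1 M1 g = 0" "apply_op_x2 M2 g = 0"
    and "op_deg2 M1 \<le> d" "op_deg2 M2 \<le> d" "1 \<le> d" "op_ord M1 \<le> r" "op_ord M2 \<le> r"
  shows "\<exists>P. op_nonzero P \<and> apply_op1 P (diag12 g) = 0 \<and>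
    op_deg1 P \<le> 121 * d ^ 2 * r ^ 2 \<and> op_ord P \<le> 121 * d ^ 2 * r ^ 2"
proof (cases "g = 0")
  case True
  then have "diag12 g = 0"
    by (intro fps_ext) (simp add: diag12_def)
  then show ?thesis
    by (intro exI[of _ "[1]"]) (simp add: op_nonzero_def apply_op1_def op_deg1_def op_ord_def)
next
  case False
  interpret bivariate_annihilators g M1 M2 d
    using assms False by unfold_locales
  show ?thesis
    using diagonal_annihilator assms(7-9) by (simp add: r1_def r2_def op_ord_def)
qed

section \<open>D-finiteness from an annihilating operator\<close>

lemma ratfun1_fps_of_poly: "Fract (fps_of_poly p) 1 \<in> ratfun1"
  unfolding ratfun1_def by (intro CollectI exI[of _ p] exI[of _ 1]) simp

lemma ratfun1_inverse_fps_of_poly: "p \<noteq> 0 \<Longrightarrow> Fract 1 (fps_of_poly p) \<in> ratfun1"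
  unfolding ratfun1_def by (intro CollectI exI[of _ 1] exI[of _ p]) simp

lemma ratfun1_add: "x \<in> ratfun1 \<Longrightarrow> y \<in> ratfun1 \<Longrightarrow> x + y \<in> ratfun1"
  unfolding ratfun1_def
proof clarify
  fix p q p' q' :: "'a poly"
  assume "q \<noteq> 0" "q' \<noteq> 0"
  then show "\<exists>p'' q''. Fract (fps_of_poly p) (fps_of_poly q) + Fract (fps_of_poly p') (fps_of_poly q') =
      Fract (fps_of_poly p'') (fps_of_poly q'') \<and> q'' \<noteq> 0"
    by (intro exI[of _ "p * q' + p' * q"] exI[of _ "q * q'"])
      (simp add: fps_of_poly_eq_iff[of _ 0, simplified] fps_of_poly_mult fps_of_poly_add)
qed

lemma ratfun1_mult: "x \<in> ratfun1 \<Longrightarrow> y \<in> ratfun1 \<Longrightarrow> x * y \<in> ratfun1"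
  unfolding ratfun1_def
proof clarify
  fix p q p' q' :: "'a poly"
  assume "q \<noteq> 0" "q' \<noteq> 0"
  then show "\<exists>p'' q''. Fract (fps_of_poly p) (fps_of_poly q) * Fract (fps_of_poly p') (fps_of_poly q') =
      Fract (fps_of_poly p'') (fps_of_poly q'') \<and> q'' \<noteq> 0"
    by (intro exI[of _ "p * p'"] exI[of _ "q * q'"]) (simp add: fps_of_poly_mult)
qed

lemma ratfun1_minus: "x \<in> ratfun1 \<Longrightarrow> - x \<in> ratfun1"
proof -
  assume "x \<in> ratfun1"
  then obtain p q where "q \<noteq> 0" "x = Fract (fps_of_poly p) (fps_of_poly q)"
    unfolding ratfun1_def by blast
  then show ?thesis
    unfolding ratfun1_def by (intro CollectI exI[of _ "- p"] exI[of _ q]) (simp add: fps_of_poly_uminus)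
qed

lemma ratfun1_0: "0 \<in> ratfun1"
  using ratfun1_fps_of_poly[of 0] by (simp add: Zero_fract_def)

lemma ratfun1_1: "1 \<in> ratfun1"
  using ratfun1_fps_of_poly[of 1] by (simp add: One_fract_def)

lemma of_nat_mult_iter_fps_deriv_fps_of_poly:
  "of_nat k * (fps_deriv ^^ s) (fps_of_poly p) = fps_of_poly (of_nat k * (pderiv ^^ s) (p :: 'a::field poly))"
proof -
  have "fps_of_poly (of_nat k :: 'a poly) = of_nat k"
    by (induction k) (simp_all add: fps_of_poly_add)
  moreover have "(fps_deriv ^^ s) (fps_of_poly p) = fps_of_poly ((pderiv ^^ s) p)"
    by (induction s) (simp_all add: fps_of_poly_pderiv)
  ultimately show ?thesis
    by (simp add: fps_of_poly_mult)
qed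

definition ratfun1_span :: "'a::field fps \<Rightarrow> nat \<Rightarrow> 'a fps fract set" where
  "ratfun1_span g r = {\<Sum>i<r. c i * Fract ((fps_deriv ^^ i) g) 1 | c. \<forall>i. c i \<in> ratfun1}"

lemma ratfun1_span_derivative: "k < r \<Longrightarrow> Fract ((fps_deriv ^^ k) g) 1 \<in> ratfun1_span g r"
  unfolding ratfun1_span_def using ratfun1_0 ratfun1_1
  by (intro CollectI exI[of _ "\<lambda>i. if i = k then 1 else 0"]) (auto simp: if_distrib[of "\<lambda>x. x * _"] cong: if_cong)

lemma ratfun1_span_add: "x \<in> ratfun1_span g r \<Longrightarrow> y \<in> ratfun1_span g r \<Longrightarrow> x + y \<in> ratfun1_span g r"
  unfolding ratfun1_span_def
  by clarify (intro CollectI exI[of _ "\<lambda>i. _ i + _ i"], auto simp: ratfun1_add sum.distrib distrib_right)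

lemma ratfun1_span_minus: "x \<in> ratfun1_span g r \<Longrightarrow> - x \<in> ratfun1_span g r"
  unfolding ratfun1_span_def
  by clarify (intro CollectI exI[of _ "\<lambda>i. - _ i"], auto simp: ratfun1_minus sum_negf)

lemma ratfun1_span_scale: "\<rho> \<in> ratfun1 \<Longrightarrow> x \<in> ratfun1_span g r \<Longrightarrow> \<rho> * x \<in> ratfun1_span g r"
  unfolding ratfun1_span_def
  by clarify (intro CollectI exI[of _ "\<lambda>i. \<rho> * _ i"], auto simp: ratfun1_mult sum_distrib_left mult.assoc)

lemma ratfun1_span_0: "0 \<in> ratfun1_span g r"
  unfolding ratfun1_span_def using ratfun1_0 by (intro CollectI exI[of _ "\<lambda>_. 0"]) simp

lemma ratfun1_span_sum:
  "(\<And>i. i \<in> A \<Longrightarrow> h i \<in> ratfun1_span g r) \<Longrightarrow> sum h A \<in> ratfun1_span g r"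
  by (induction A rule: infinite_finite_induct) (auto intro: ratfun1_span_add ratfun1_span_0)

lemma Fract_add_1: "Fract (x + y) 1 = Fract x 1 + Fract (y :: 'a::idom) 1"
  by simp

lemma Fract_sum_1: "Fract (sum g A) 1 = (\<Sum>i\<in>A. Fract (g i :: 'a::idom) 1)"
  by (induction A rule: infinite_finite_induct) (simp_all add: Zero_fract_def Fract_add_1 del: add_fract)

lemma iter_fps_deriv_iter: "(fps_deriv ^^ m) ((fps_deriv ^^ n) g) = (fps_deriv ^^ (m + n)) g"
  by (simp add: funpow_add)

lemma ratfun1_span_cancel_poly:
  assumes "q \<noteq> 0" "Fract (fps_of_poly q * x) 1 \<in> ratfun1_span g r"
  shows "Fract x 1 \<in> ratfun1_span g r"
proof -
  have "Fract 1 (fps_of_poly q) * Fract (fps_of_poly q * x) 1 = Fract x 1"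
    using assms(1) mult_fract_cancel[of "fps_of_poly q" x 1] by (simp add: fps_of_poly_eq_iff[of _ 0, simplified])
  then show ?thesis
    using ratfun1_span_scale[OF ratfun1_inverse_fps_of_poly[OF assms(1)] assms(2)] by simp
qed

lemma iter_fps_deriv_in_ratfun1_span:
  fixes g :: "'a::field fps"
  assumes nonzero: "op_nonzero P" and annihilates: "apply_op1 P g = 0"
  shows "Fract ((fps_deriv ^^ k) g) 1 \<in> ratfun1_span g (op_ord P)"
proof (induction k rule: less_induct)
  case (less k)
  define r where "r = op_ord P"
  define p where "p j = fps_of_poly (P ! j)" for j
  show ?case
  proof (cases "k < r")
    case True
    then show ?thesis
      by (simp add: r_def ratfun1_span_derivative)
  next
    case False
    define e where "e = k - r"
    define T where "T j s = of_nat (e choose s) * (fps_deriv ^^ s) (p j) * (fps_deriv ^^ (e - s + j)) g" for j s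
    have lower: "Fract (T j s) 1 \<in> ratfun1_span g r" if "e - s + j < k" for j s
      using ratfun1_span_scale[OF ratfun1_fps_of_poly less[OF that]]
      by (simp add: T_def p_def of_nat_mult_iter_fps_deriv_fps_of_poly r_def)
    have "length P = Suc r"
      using nonzero by (simp add: op_nonzero_def r_def op_ord_def)
    then have "0 = (fps_deriv ^^ e) (\<Sum>j\<le>r. p j * (fps_deriv ^^ j) g)"
      using annihilates by (simp add: apply_op1_def lessThan_Suc_atMost p_def)
    also have "\<dots> = (\<Sum>j\<le>r. \<Sum>s\<le>e. T j s)"
      by (simp add: fps_deriv.iter_sum fps_deriv.leibniz T_def mult.assoc iter_fps_deriv_iter)
    also have "\<dots> = (\<Sum>j<r. \<Sum>s\<le>e. T j s) + (\<Sum>s\<le>e. T r s)"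
      by (simp flip: lessThan_Suc_atMost)
    also have "(\<Sum>s\<le>e. T r s) = T r 0 + (\<Sum>s<e. T r (Suc s))"
      by (rule sum.atMost_shift)
    finally have "Fract (T r 0 + ((\<Sum>j<r. \<Sum>s\<le>e. T j s) + (\<Sum>s<e. T r (Suc s)))) 1 = 0"
      by (simp add: ac_simps Zero_fract_def)
    then have "Fract (T r 0) 1 = - ((\<Sum>j<r. \<Sum>s\<le>e. Fract (T j s) 1) + (\<Sum>s<e. Fract (T r (Suc s)) 1))"
      by (simp only: Fract_add_1 Fract_sum_1 eq_neg_iff_add_eq_0)
    also have "\<dots> \<in> ratfun1_span g r"
      using False lower unfolding e_def by (intro ratfun1_span_minus ratfun1_span_add ratfun1_span_sum) auto
    finally have "Fract (fps_of_poly (P ! r) * (fps_deriv ^^ k) g) 1 \<in> ratfun1_span g r"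
      using False by (simp add: T_def e_def p_def)
    moreover have "P ! r \<noteq> 0"
      using nonzero by (auto simp: last_conv_nth op_nonzero_def r_def op_ord_def)
    ultimately show ?thesis
      unfolding r_def by (rule ratfun1_span_cancel_poly[rotated])
  qed
qed

lemma dfinite1_of_annihilator: "op_nonzero P \<Longrightarrow> apply_op1 P g = 0 \<Longrightarrow> dfinite1 g"
  unfolding dfinite1_def using iter_fps_deriv_in_ratfun1_span unfolding ratfun1_span_def by blast

lemma diagonal_annihilator_of_hyp:
  fixes g :: "'a::field_char_0 fps fps" and M1 M2 :: "'a poly poly list"
  defines "d \<equiv> max (op_deg2 M1) (op_deg2 M2)" and "r \<equiv> max (op_ord M1) (op_ord M2)"
  assumes "hyp g M1 M2" "d \<ge> 1" "r \<ge> 1"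
  shows "\<exists>P. op_nonzero P \<and> apply_op1 P (diag12 g) = 0 \<and>
    op_deg1 P \<le> 121 * d ^ 3 * r ^ 4 \<and> op_ord P \<le> 121 * d ^ 2 * r ^ 2"
proof -
  obtain P where P: "op_nonzero P" "apply_op1 P (diag12 g) = 0"
      "op_deg1 P \<le> 121 * d ^ 2 * r ^ 2" "op_ord P \<le> 121 * d ^ 2 * r ^ 2"
    using diagonal_annihilator_bound[of M1 M2 g d r] assms by (auto simp: hyp_def)
  have "121 * d ^ 2 * r ^ 2 \<le> 121 * d ^ 3 * r ^ 4"
    using assms by (intro mult_le_mono mult_le_mono2 power_increasing) auto
  then show ?thesis
    using P by (intro exI[of _ P]) auto
qed

theorem corollary3p18:
  fixes f :: "'a::field_char_0 fps fps" and L1 L2 :: "'a poly poly list"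
  assumes "dfinite2 f"
    and "op_nonzero L1" and "apply_op_x1 L1 f = 0"
    and "op_nonzero L2" and "apply_op_x2 L2 f = 0"
  shows "dfinite1 (diag12 f) \<and>
    (\<exists>C N::nat. \<forall>(g::'a fps fps) M1 M2. hyp g M1 M2 \<longrightarrow>
        max (op_deg2 M1) (op_deg2 M2) \<ge> N \<longrightarrow> max (op_ord M1) (op_ord M2) \<ge> N \<longrightarrow>
        (\<exists>P. op_nonzero P \<and> apply_op1 P (diag12 g) = 0 \<and>
           op_deg1 P \<le> C * max (op_deg2 M1) (op_deg2 M2) ^ 3 * max (op_ord M1) (op_ord M2) ^ 4 \<and>
           op_ord P \<le> C * max (op_deg2 M1) (op_deg2 M2) ^ 2 * max (op_ord M1) (op_ord M2) ^ 2))"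
proof (intro conjI)
  obtain P where "op_nonzero P" "apply_op1 P (diag12 f) = 0"
    using diagonal_annihilator_bound[OF assms(2,4,3,5),
        of "max (max (op_deg2 L1) (op_deg2 L2)) 1" "max (op_ord L1) (op_ord L2)"]
    by fastforce
  then show "dfinite1 (diag12 f)"
    by (rule dfinite1_of_annihilator)
qed (rule exI[of _ 121], rule exI[of _ 1], blast intro: diagonal_annihilator_of_hyp)

end
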